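(* Let $Q=[0,1]^d$, $d\ge2$, with canonical basis $(e_i)_{i=1}^d$, and let $v:\{0,1\}^d\to\mathbb{R}^d$ be given at the vertices of $Q$ such that $v_i(x+e_i)=v_i(x)$ for every $i$ and every $x\in\{0,1\}^d$ with $x_i=0$, and $v_i(x+e_i+e_j)+v_j(x+e_i+e_j)=v_i(x)+v_j(x)$ for every $i\ne j$ and every $x\in\{0,1\}^d$ with $x_i=x_j=0$. Denote also by $v$ the $d$-linear interpolation of these values on $Q$. Then $e(v)=0$ in $Q$ (so that $v$ is affine with skew-symmetric gradient). *)

theory Defs
  imports "HOL-Analysis.Analysis"
begin

definition cube_vertices :: "(real^'n) set" where
  "cube_vertices = {x. \<forall>k. x$k = 0 \<or> x$k = 1}"

definition multilin_interp :: "(real^'n \<Rightarrow> real^'n) \<Rightarrow> real^'n \<Rightarrow> real^'n" where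
  "multilin_interp v y =
     (\<Sum>x\<in>cube_vertices. (\<Prod>k\<in>UNIV. if x$k = 1 then y$k else 1 - y$k) *\<^sub>R v x)"

definition sym_grad :: "(real^'n \<Rightarrow> real^'n) \<Rightarrow> real^'n \<Rightarrow> 'n \<Rightarrow> 'n \<Rightarrow> real" where
  "sym_grad w y i j =
     ((frechet_derivative w (at y) (axis j 1)) $ i + (frechet_derivative w (at y) (axis i 1)) $ j) / 2"

end

theory Submission
  imports Defs
begin

text \<open>
  The interpolant is the sum over vertices x of v x weighted by the product of the
  one-dimensional factors hat k x y, so its j-th partial derivative at y is a sum over vertices
  in which the j-th factor is replaced by a sign. Reflecting the cube in the i-th coordinate is an
  involution on the vertices. For i = j it reverses the sign and, by the edge condition, fixes the
  i-th component of v, so the diagonal derivatives cancel. For i \<noteq> j, averaging over the same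
  reflection removes the i-th factor from the j-th partial derivative of v_i; then the composite
  reflection in both coordinates i and j reverses both signs and, by the edge and face
  conditions, maps the integrand of the symmetric sum to its negative.
\<close>

definition hat :: "'n \<Rightarrow> real^'n \<Rightarrow> real^'n \<Rightarrow> real" where
  "hat k x y = (if x$k = 1 then y$k else 1 - y$k)"

definition vertex_sign :: "'n \<Rightarrow> real^'n \<Rightarrow> real" where
  "vertex_sign k x = (if x$k = 1 then 1 else -1)"

definition flip_coord :: "'n \<Rightarrow> real^'n \<Rightarrow> real^'n" where
  "flip_coord i x = (\<chi> k. if k = i then 1 - x$k else x$k)"

lemma flip_coord_nth: "flip_coord i x $ k = (if k = i then 1 - x$k else x$k)"
  by (simp add: flip_coord_def)

lemma cube_vertices_nth: "x \<in> cube_vertices \<Longrightarrow> x$k = 0 \<or> x$k = 1"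
  by (simp add: cube_vertices_def)

lemma flip_coord_cube_vertices: "x \<in> cube_vertices \<Longrightarrow> flip_coord i x \<in> cube_vertices"
  by (auto simp: cube_vertices_def flip_coord_nth)

lemma flip_coord_flip_coord [simp]: "flip_coord i (flip_coord i x) = x"
  by (simp add: vec_eq_iff flip_coord_nth)

lemma flip_coord_commute: "flip_coord i (flip_coord j x) = flip_coord j (flip_coord i x)"
  by (simp add: vec_eq_iff flip_coord_nth)

lemma hat_flip_coord:
  "x \<in> cube_vertices \<Longrightarrow> hat k (flip_coord i x) y = (if k = i then 1 - hat k x y else hat k x y)"
  using cube_vertices_nth[of x i] by (auto simp: hat_def flip_coord_nth)

lemma vertex_sign_flip_coord:
  "x \<in> cube_vertices \<Longrightarrow>
     vertex_sign k (flip_coord i x) = (if k = i then - vertex_sign k x else vertex_sign k x)"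
  using cube_vertices_nth[of x i] by (auto simp: vertex_sign_def flip_coord_nth)

lemma prod_hat_flip_coord:
  "x \<in> cube_vertices \<Longrightarrow> i \<notin> S \<Longrightarrow> (\<Prod>k\<in>S. hat k (flip_coord i x) y) = (\<Prod>k\<in>S. hat k x y)"
  by (intro prod.cong) (auto simp: hat_flip_coord)

lemma sum_cube_vertices_flip_coord:
  "(\<Sum>x\<in>cube_vertices. F (flip_coord i x)) = (\<Sum>x\<in>cube_vertices. F x)"
  by (rule sum.reindex_bij_witness[where i="flip_coord i" and j="flip_coord i"])
     (auto simp: flip_coord_cube_vertices)

lemma sum_odd_involution_eq_0:
  fixes G :: "'a \<Rightarrow> 'b::real_vector"
  assumes "\<And>x. x \<in> S \<Longrightarrow> g x \<in> S" "\<And>x. x \<in> S \<Longrightarrow> g (g x) = x"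
    and "\<And>x. x \<in> S \<Longrightarrow> G (g x) = - G x"
  shows "sum G S = 0"
proof -
  have "sum G S = sum (G \<circ> g) S"
    by (rule sum.reindex_bij_witness[where i=g and j=g]) (auto simp: assms)
  also have "\<dots> = - sum G S"
    by (simp add: assms sum_negf)
  finally show ?thesis
    by (simp add: eq_neg_iff_add_eq_0 scaleR_2[symmetric])
qed

lemma has_derivative_hat:
  "((\<lambda>y. hat k x y) has_derivative (\<lambda>h. vertex_sign k x * h$k)) (at y)"
proof -
  have "((\<lambda>y. 1 - y$k) has_derivative (\<lambda>h. 0 - h$k)) (at y)"
    by (intro derivative_intros bounded_linear_imp_has_derivative bounded_linear_vec_nth)
  then show ?thesis
    using bounded_linear_imp_has_derivative[OF bounded_linear_vec_nth[of k], of "at y"]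
    by (simp add: hat_def[abs_def] vertex_sign_def)
qed

lemma multilin_interp_eq:
  "multilin_interp v = (\<lambda>y. \<Sum>x\<in>cube_vertices. (\<Prod>k\<in>UNIV. hat k x y) *\<^sub>R v x)"
  by (simp add: multilin_interp_def[abs_def] hat_def)

lemma has_derivative_multilin_interp:
  "(multilin_interp v has_derivative
     (\<lambda>h. \<Sum>x\<in>cube_vertices.
            (\<Sum>k\<in>UNIV. vertex_sign k x * h$k * (\<Prod>l\<in>UNIV - {k}. hat l x y)) *\<^sub>R v x)) (at y)"
  unfolding multilin_interp_eq
  by (intro has_derivative_sum has_derivative_scaleR_left has_derivative_prod has_derivative_hat)

lemma partial_multilin_interp:
  "frechet_derivative (multilin_interp v) (at y) (axis j 1) $ i =
     (\<Sum>x\<in>cube_vertices. vertex_sign j x * (\<Prod>k\<in>UNIV - {j}. hat k x y) * v x $ i)"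
proof -
  have "(\<Sum>k\<in>UNIV. vertex_sign k x * axis j 1 $ k * (\<Prod>l\<in>UNIV - {k}. hat l x y)) =
      vertex_sign j x * (\<Prod>k\<in>UNIV - {j}. hat k x y)" for x
  proof -
    have "(\<Sum>k\<in>UNIV. vertex_sign k x * axis j 1 $ k * (\<Prod>l\<in>UNIV - {k}. hat l x y)) =
        (\<Sum>k\<in>UNIV. if k = j then vertex_sign j x * (\<Prod>l\<in>UNIV - {j}. hat l x y) else 0)"
      by (rule sum.cong) (auto simp: axis_def)
    then show ?thesis
      by simp
  qed
  then show ?thesis
    unfolding frechet_derivative_at[OF has_derivative_multilin_interp, symmetric]
    by (simp add: sum_component)
qed

locale vertex_edge_condition =
  fixes v :: "real^'n \<Rightarrow> real^'n"
  assumes edge: "\<And>i x. x \<in> cube_vertices \<Longrightarrow> x$i = 0 \<Longrightarrow> v (x + axis i 1) $ i = v x $ i"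
begin

lemma edge_flip_coord:
  assumes x: "x \<in> cube_vertices"
  shows "v (flip_coord i x) $ i = v x $ i"
  using cube_vertices_nth[OF x, of i]
proof
  assume "x$i = 0"
  moreover have "flip_coord i x = x + axis i 1"
    using \<open>x$i = 0\<close> by (simp add: vec_eq_iff flip_coord_nth axis_def)
  ultimately show ?thesis
    using edge[OF x] by simp
next
  assume "x$i = 1"
  then have "v (flip_coord i x + axis i 1) $ i = v (flip_coord i x) $ i"
    by (intro edge flip_coord_cube_vertices x) (simp add: flip_coord_nth)
  moreover have "flip_coord i x + axis i 1 = x"
    using \<open>x$i = 1\<close> by (simp add: vec_eq_iff flip_coord_nth axis_def)
  ultimately show ?thesis
    by simp
qed

lemma partial_multilin_interp_diag:
  "frechet_derivative (multilin_interp v) (at y) (axis i 1) $ i = 0"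
  unfolding partial_multilin_interp
  by (rule sum_odd_involution_eq_0[where g="flip_coord i"])
     (auto simp: flip_coord_cube_vertices vertex_sign_flip_coord prod_hat_flip_coord
        edge_flip_coord)

lemma partial_multilin_interp_drop_hat:
  assumes "i \<noteq> j"
  shows "2 * frechet_derivative (multilin_interp v) (at y) (axis j 1) $ i =
    (\<Sum>x\<in>cube_vertices. vertex_sign j x * (\<Prod>k\<in>UNIV - {i,j}. hat k x y) * v x $ i)"
proof -
  let ?A = "\<lambda>x. \<Prod>k\<in>UNIV - {i,j}. hat k x y"
  let ?F = "\<lambda>x. vertex_sign j x * (\<Prod>k\<in>UNIV - {j}. hat k x y) * v x $ i"
  have prod_split: "(\<Prod>k\<in>UNIV - {j}. hat k x y) = hat i x y * ?A x" for x
  proof -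
    have "UNIV - {j} = insert i (UNIV - {i,j})"
      using assms by auto
    then show ?thesis
      by simp
  qed
  have "?F x + ?F (flip_coord i x) = vertex_sign j x * ?A x * v x $ i"
    if "x \<in> cube_vertices" for x
  proof -
    have "?F (flip_coord i x) = vertex_sign j x * ((1 - hat i x y) * ?A x) * v x $ i"
      using that assms unfolding prod_split[of "flip_coord i x"]
      by (simp add: vertex_sign_flip_coord hat_flip_coord prod_hat_flip_coord edge_flip_coord)
    then show ?thesis
      by (simp add: prod_split algebra_simps)
  qed
  then have "(\<Sum>x\<in>cube_vertices. ?F x + ?F (flip_coord i x)) =
      (\<Sum>x\<in>cube_vertices. vertex_sign j x * ?A x * v x $ i)"
    by (rule sum.cong[OF refl])
  moreover have "2 * sum ?F cube_vertices = (\<Sum>x\<in>cube_vertices. ?F x + ?F (flip_coord i x))"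
    by (simp add: sum.distrib sum_cube_vertices_flip_coord[of ?F])
  ultimately show ?thesis
    by (simp add: partial_multilin_interp)
qed

end

locale vertex_face_condition = vertex_edge_condition v for v :: "real^'n \<Rightarrow> real^'n" +
  assumes face: "\<And>i j x. i \<noteq> j \<Longrightarrow> x \<in> cube_vertices \<Longrightarrow> x$i = 0 \<Longrightarrow> x$j = 0 \<Longrightarrow>
        v (x + axis i 1 + axis j 1) $ i + v (x + axis i 1 + axis j 1) $ j = v x $ i + v x $ j"
begin

lemma face_flip_coord:
  assumes x: "x \<in> cube_vertices" and ij: "i \<noteq> j" and "x$i = x$j"
  shows "v (flip_coord i (flip_coord j x)) $ i + v (flip_coord i (flip_coord j x)) $ j =
    v x $ i + v x $ j"
  using cube_vertices_nth[OF x, of i]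
proof
  assume "x$i = 0"
  moreover have "flip_coord i (flip_coord j x) = x + axis i 1 + axis j 1"
    using \<open>x$i = 0\<close> \<open>x$i = x$j\<close> ij by (simp add: vec_eq_iff flip_coord_nth axis_def)
  ultimately show ?thesis
    using face[OF ij x] \<open>x$i = x$j\<close> by simp
next
  let ?w = "flip_coord i (flip_coord j x)"
  assume "x$i = 1"
  then have "v (?w + axis i 1 + axis j 1) $ i + v (?w + axis i 1 + axis j 1) $ j =
      v ?w $ i + v ?w $ j"
    using \<open>x$i = x$j\<close> ij
    by (intro face flip_coord_cube_vertices x) (simp_all add: flip_coord_nth)
  moreover have "?w + axis i 1 + axis j 1 = x"
    using \<open>x$i = 1\<close> \<open>x$i = x$j\<close> ij by (simp add: vec_eq_iff flip_coord_nth axis_def)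
  ultimately show ?thesis
    by simp
qed

lemma signed_pair_flip_coord_both:
  assumes x: "x \<in> cube_vertices" and ij: "i \<noteq> j"
  shows "vertex_sign j (flip_coord i (flip_coord j x)) * v (flip_coord i (flip_coord j x)) $ i +
      vertex_sign i (flip_coord i (flip_coord j x)) * v (flip_coord i (flip_coord j x)) $ j =
    - (vertex_sign j x * v x $ i + vertex_sign i x * v x $ j)"
proof -
  let ?g = "\<lambda>x. flip_coord i (flip_coord j x)"
  have signs: "vertex_sign i (?g x) = - vertex_sign i x" "vertex_sign j (?g x) = - vertex_sign j x"
    using ij by (simp_all add: vertex_sign_flip_coord flip_coord_cube_vertices x)
  show ?thesis
  proof (cases "x$i = x$j")
    case True
    then have "vertex_sign i x = vertex_sign j x"
      by (simp add: vertex_sign_def)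
    moreover have "vertex_sign j x * v (?g x) $ i + vertex_sign j x * v (?g x) $ j =
        vertex_sign j x * v x $ i + vertex_sign j x * v x $ j"
      using face_flip_coord[OF x ij True] by (simp flip: distrib_left)
    ultimately show ?thesis
      by (simp add: signs)
  next
    case False
    let ?u = "flip_coord i x" and ?w = "flip_coord j x"
    have u: "?u \<in> cube_vertices" and "?u$i = ?u$j"
      using False cube_vertices_nth[OF x, of i] cube_vertices_nth[OF x, of j] ij
      by (auto simp: flip_coord_cube_vertices x flip_coord_nth)
    moreover have "?g ?u = ?w"
      by (simp add: flip_coord_commute)
    ultimately have "v ?w $ i + v ?w $ j = v ?u $ i + v ?u $ j"
      using face_flip_coord[OF u ij] by simp
    moreover have "v x $ i = v ?u $ i" "v x $ j = v ?w $ j"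
      using edge_flip_coord[OF x] by simp_all
    moreover have "v (?g x) $ i = v ?w $ i"
      using edge_flip_coord[OF flip_coord_cube_vertices[OF x]] .
    moreover have "v (?g x) $ j = v ?u $ j"
      using edge_flip_coord[OF flip_coord_cube_vertices[OF x]]
      by (simp add: flip_coord_commute[of i j])
    ultimately have "v (?g x) $ i - v (?g x) $ j = v x $ i - v x $ j"
      by linarith
    moreover have "vertex_sign i x = - vertex_sign j x"
      using False cube_vertices_nth[OF x, of i] cube_vertices_nth[OF x, of j]
      by (auto simp: vertex_sign_def)
    ultimately show ?thesis
      by (simp add: signs) (simp flip: right_diff_distrib)
  qed
qed

lemma partial_multilin_interp_skew:
  assumes ij: "i \<noteq> j"
  shows "frechet_derivative (multilin_interp v) (at y) (axis j 1) $ i +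
    frechet_derivative (multilin_interp v) (at y) (axis i 1) $ j = 0"
proof -
  let ?A = "\<lambda>x. \<Prod>k\<in>UNIV - {i,j}. hat k x y"
  let ?g = "\<lambda>x. flip_coord i (flip_coord j x)"
  let ?G = "\<lambda>x. ?A x * (vertex_sign j x * v x $ i + vertex_sign i x * v x $ j)"
  have "2 * frechet_derivative (multilin_interp v) (at y) (axis j 1) $ i +
      2 * frechet_derivative (multilin_interp v) (at y) (axis i 1) $ j = sum ?G cube_vertices"
    using partial_multilin_interp_drop_hat[OF ij, of y]
      partial_multilin_interp_drop_hat[OF ij[symmetric], of y]
    by (simp add: insert_commute sum.distrib[symmetric] algebra_simps)
  also have "\<dots> = 0"
  proof (rule sum_odd_involution_eq_0[where g="?g"])
    fix x :: "real^'n" assume x: "x \<in> cube_vertices"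
    then show "?g x \<in> cube_vertices" "?g (?g x) = x"
      by (simp_all add: flip_coord_cube_vertices flip_coord_commute[of i j])
    have "?A (?g x) = ?A x"
      by (simp add: prod_hat_flip_coord flip_coord_cube_vertices x)
    with signed_pair_flip_coord_both[OF x ij] show "?G (?g x) = - ?G x"
      by (simp only: mult_minus_right)
  qed
  finally show ?thesis
    by simp
qed

end

theorem lemmaA1:
  fixes v :: "real^'n \<Rightarrow> real^'n"
  assumes d2: "CARD('n) \<ge> 2"
    and edge: "\<And>i x. x \<in> cube_vertices \<Longrightarrow> x$i = 0 \<Longrightarrow> v (x + axis i 1) $ i = v x $ i"
    and face: "\<And>i j x. i \<noteq> j \<Longrightarrow> x \<in> cube_vertices \<Longrightarrow> x$i = 0 \<Longrightarrow> x$j = 0 \<Longrightarrow>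
        v (x + axis i 1 + axis j 1) $ i + v (x + axis i 1 + axis j 1) $ j = v x $ i + v x $ j"
  shows "\<forall>y\<in>cbox 0 1. multilin_interp v differentiable (at y) \<and>
           (\<forall>i j. sym_grad (multilin_interp v) y i j = 0)"
proof (intro ballI conjI allI)
  interpret vertex_face_condition v
    using edge face by unfold_locales
  fix y :: "real^'n" and i j
  show "multilin_interp v differentiable (at y)"
    using has_derivative_multilin_interp by (auto simp: differentiable_def)
  show "sym_grad (multilin_interp v) y i j = 0"
    by (cases "i = j")
       (simp_all add: sym_grad_def partial_multilin_interp_diag partial_multilin_interp_skew)
qed

end
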